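(* Let $W$ be a finite real reflection group acting effectively on $\mathbf{R}^n$, with root system consisting of unit vectors, and let $\mathcal{A}$ be its (central, essential) arrangement of reflecting hyperplanes with intersection lattice $L_{\mathcal{A}}$. Let $\tau_1,\dots,\tau_n$ be any linearly independent roots. Let $$\lambda=\min\{|\mathbf{r}\cdot\rho| : \mathbf{r}\text{ a unit ray},\ \rho\text{ a root},\ \mathbf{r}\cdot\rho\neq 0\},$$ $a=1+1/\lambda$, and $\mathbf{v}=\tau_1+a\tau_2+a^2\tau_3+\dots+a^{n-1}\tau_n$. Then $|\mathbf{r}\cdot\mathbf{v}|\ge\lambda$ for every unit length ray $\mathbf{r}$. In particular, the affine hyperplane $H_{\mathbf{v}}$ is generic with respect to $\mathcal{A}$.
   Context: The roots of $W$ are the unit vectors $\pm\rho$ normal to reflecting hyperplanes of $W$ (in particular they are images under $W$ of the inward unit normals of a fundamental chamber). $L_{\mathcal{A}}$ is the set of intersections of subfamilies of $\mathcal{A}$, ordered by reverse inclusion. A ray is a nonzero vector lying in a one-dimensional subspace belonging to $L_{\mathcal{A}}$; a unit ray is a ray of length $1$ (there are finitely many, so $\lambda$ is a well-defined positive real number). For a nonzero vector $\mathbf{v}$, $H_{\mathbf{v}}$ is the affine hyperplane through $\mathbf{v}$ and normal to $\mathbf{v}$, i.e. $\{\mathbf{x}:\mathbf{x}\cdot\mathbf{v}=\mathbf{v}\cdot\mathbf{v}\}$. $H_{\mathbf{v}}$ is generic with respect to $\mathcal{A}$ if $\dim(H_{\mathbf{v}}\cap X)=\dim(X)-1$ for all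 $X\in L_{\mathcal{A}}$. *)

theory Defs
  imports "HOL-Analysis.Analysis"
begin

definition refl :: "'a::euclidean_space \<Rightarrow> 'a \<Rightarrow> 'a" where
  "refl \<rho> x = x - (2 * (x \<bullet> \<rho>)) *\<^sub>R \<rho>"

inductive_set gen_monoid :: "('a \<Rightarrow> 'a) set \<Rightarrow> ('a \<Rightarrow> 'a) set" for S where
  gen_id: "id \<in> gen_monoid S"
| gen_step: "s \<in> S \<Longrightarrow> g \<in> gen_monoid S \<Longrightarrow> s \<circ> g \<in> gen_monoid S"

definition roots :: "('a::euclidean_space \<Rightarrow> 'a) set \<Rightarrow> 'a set" where
  "roots W = {\<rho>. norm \<rho> = 1 \<and> refl \<rho> \<in> W}"

text \<open>A finite real reflection group: a finite set of linear maps generated (as a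
  monoid, hence as a group since it is finite) by the reflections it contains.\<close>
definition finite_reflection_group :: "('a::euclidean_space \<Rightarrow> 'a) set \<Rightarrow> bool" where
  "finite_reflection_group W \<longleftrightarrow> finite W \<and> W = gen_monoid (refl ` roots W)"

text \<open>Essential: roots span the whole space (no nonzero common fixed vector).\<close>
definition essential :: "('a::euclidean_space \<Rightarrow> 'a) set \<Rightarrow> bool" where
  "essential W \<longleftrightarrow> span (roots W) = UNIV"

definition arrangement :: "('a::euclidean_space \<Rightarrow> 'a) set \<Rightarrow> 'a set set" where
  "arrangement W = {{x. x \<bullet> \<rho> = 0} | \<rho>. \<rho> \<in> roots W}"

definition int_lattice :: "('a::euclidean_space \<Rightarrow> 'a) set \<Rightarrow> 'a set set" where
  "int_lattice W = {\<Inter> B | B. B \<subseteq> arrangement W}"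

definition ray :: "('a::euclidean_space \<Rightarrow> 'a) set \<Rightarrow> 'a \<Rightarrow> bool" where
  "ray W r \<longleftrightarrow> r \<noteq> 0 \<and> (\<exists>X \<in> int_lattice W. dim X = 1 \<and> r \<in> X)"

definition unit_ray :: "('a::euclidean_space \<Rightarrow> 'a) set \<Rightarrow> 'a \<Rightarrow> bool" where
  "unit_ray W r \<longleftrightarrow> ray W r \<and> norm r = 1"

definition lambda_const :: "('a::euclidean_space \<Rightarrow> 'a) set \<Rightarrow> real" where
  "lambda_const W = Min {\<bar>r \<bullet> \<rho>\<bar> | r \<rho>. unit_ray W r \<and> \<rho> \<in> roots W \<and> r \<bullet> \<rho> \<noteq> 0}"

definition H :: "'a::euclidean_space \<Rightarrow> 'a set" where
  "H v = {x. x \<bullet> v = v \<bullet> v}"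

text \<open>Genericity; dimensions of affine sets via aff_dim (empty set has dimension -1).\<close>
definition generic :: "('a::euclidean_space \<Rightarrow> 'a) set \<Rightarrow> 'a \<Rightarrow> bool" where
  "generic W v \<longleftrightarrow> (\<forall>X \<in> int_lattice W. aff_dim (H v \<inter> X) = aff_dim X - 1)"

end

theory Submission
  imports Defs
begin

text \<open>Write \<open>c\<^sub>i = r \<bullet> \<tau>\<^sub>i\<close> for a unit ray \<open>r\<close>. Each \<open>c\<^sub>i\<close> lies in \<open>[-1, 1]\<close>
  and is either \<open>0\<close> or at least \<open>\<lambda>\<close> in absolute value, and some \<open>c\<^sub>i\<close> is nonzero since the
  \<open>\<tau>\<^sub>i\<close> span. With \<open>a = 1 + 1/\<lambda>\<close>, the geometric sum \<open>\<Sum>\<^sub>i\<^sub><\<^sub>k a\<^sup>i = \<lambda>(a\<^sup>k - 1)\<close> shows that the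
  last nonzero term \<open>a\<^sup>k c\<^sub>k\<close> of \<open>r \<bullet> v = \<Sum> a\<^sup>i c\<^sub>i\<close> outweighs all earlier ones by at least \<open>\<lambda>\<close>.
  Since every nonzero flat of the arrangement contains a unit ray, \<open>v\<close> is orthogonal to no
  nonzero flat, so \<open>H\<^sub>v\<close> cuts every flat in codimension one.\<close>

lemma geometric_sum_one_plus_inverse:
  fixes l :: real
  assumes "l > 0"
  shows "(\<Sum>i<k. (1 + 1/l) ^ i) = l * ((1 + 1/l) ^ k - 1)"
proof -
  have "1 + 1/l \<noteq> 1" using assms by simp
  then show ?thesis unfolding sum_gp_strict using assms by (simp add: field_simps)
qed

lemma dominant_last_term_sum_bound:
  fixes c :: "nat \<Rightarrow> real" and l :: real
  assumes "l > 0"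
    and le_one: "\<And>i. i < n \<Longrightarrow> \<bar>c i\<bar> \<le> 1"
    and zero_or_ge: "\<And>i. i < n \<Longrightarrow> c i = 0 \<or> l \<le> \<bar>c i\<bar>"
    and nonzero: "\<exists>i<n. c i \<noteq> 0"
  shows "l \<le> \<bar>\<Sum>i<n. (1 + 1/l) ^ i * c i\<bar>"
  using le_one zero_or_ge nonzero
proof (induction n)
  case 0
  then show ?case by simp
next
  case (Suc n)
  define a where "a = 1 + 1/l"
  have "a > 0" using \<open>l > 0\<close> by (simp add: a_def add_pos_pos)
  show ?case
  proof (cases "c n = 0")
    case True
    then show ?thesis using Suc by (auto simp: less_Suc_eq)
  next
    case False
    have "\<bar>\<Sum>i<n. a ^ i * c i\<bar> \<le> (\<Sum>i<n. \<bar>a ^ i * c i\<bar>)"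
      by (rule sum_abs)
    also have "\<dots> \<le> (\<Sum>i<n. a ^ i)"
      using Suc.prems(1) \<open>a > 0\<close> by (intro sum_mono) (simp add: abs_mult mult_left_le)
    also have "\<dots> = l * (a ^ n - 1)"
      unfolding a_def by (rule geometric_sum_one_plus_inverse[OF \<open>l > 0\<close>])
    finally have tail: "\<bar>\<Sum>i<n. a ^ i * c i\<bar> \<le> l * (a ^ n - 1)" .
    have head: "a ^ n * l \<le> \<bar>a ^ n * c n\<bar>"
      using Suc.prems(2)[of n] False \<open>a > 0\<close> by (simp add: abs_mult)
    have "l = a ^ n * l - l * (a ^ n - 1)" by (simp add: algebra_simps)
    also have "\<dots> \<le> \<bar>\<Sum>i<Suc n. a ^ i * c i\<bar>" using head tail by simp
    finally show ?thesis unfolding a_def .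
  qed
qed

lemma spanning_set_not_orthogonal:
  fixes x :: "'a::euclidean_space"
  assumes "span S = UNIV" and "x \<noteq> 0"
  obtains s where "s \<in> S" and "x \<bullet> s \<noteq> 0"
  using orthogonal_to_span[of x S x] assms by (auto simp: orthogonal_def)


lemma refl_unit_eq_imp:
  fixes \<rho> \<sigma> :: "'a::euclidean_space"
  assumes "norm \<rho> = 1" "norm \<sigma> = 1" "refl \<rho> = refl \<sigma>"
  shows "\<sigma> = \<rho> \<or> \<sigma> = - \<rho>"
proof -
  have "\<rho> \<bullet> \<rho> = 1" using assms(1) by (simp add: dot_square_norm)
  moreover have "refl \<rho> \<rho> = refl \<sigma> \<rho>" using assms(3) by simp
  ultimately have "2 *\<^sub>R \<rho> = 2 *\<^sub>R ((\<rho> \<bullet> \<sigma>) *\<^sub>R \<sigma>)"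
    by (simp add: refl_def algebra_simps scaleR_2)
  hence \<rho>_eq: "\<rho> = (\<rho> \<bullet> \<sigma>) *\<^sub>R \<sigma>" by (simp only: scaleR_cancel_left) simp
  hence "\<bar>\<rho> \<bullet> \<sigma>\<bar> = 1" using assms(1,2) by (metis norm_scaleR mult.right_neutral)
  thus ?thesis using \<rho>_eq by (auto simp: abs_if split: if_splits)
qed

lemma finite_roots:
  assumes "finite W"
  shows "finite (roots W)"
proof -
  have "roots W = refl -` W \<inter> {\<rho>. norm \<rho> = 1}" by (auto simp: roots_def)
  moreover have "finite (refl -` {g} \<inter> {\<rho>. norm \<rho> = 1})" for g :: "'a \<Rightarrow> 'a"
  proof (cases "refl -` {g} \<inter> {\<rho>. norm \<rho> = 1} = {}")
    case False
    then obtain \<rho> where \<rho>: "norm \<rho> = 1" "refl \<rho> = g" by auto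
    have "refl -` {g} \<inter> {\<rho>. norm \<rho> = 1} \<subseteq> {\<rho>, -\<rho>}"
      using refl_unit_eq_imp[OF \<rho>(1)] \<rho>(2) by (auto simp: eq_commute[of "refl \<rho>"])
    then show ?thesis by (rule finite_subset) simp
  qed simp
  ultimately show ?thesis using assms by (simp add: finite_finite_vimage_IntI)
qed

lemma finite_int_lattice:
  assumes "finite W"
  shows "finite (int_lattice W)"
proof -
  have "arrangement W = (\<lambda>\<rho>. {x. x \<bullet> \<rho> = 0}) ` roots W"
    unfolding arrangement_def by auto
  moreover have "int_lattice W = Inter ` Pow (arrangement W)"
    unfolding int_lattice_def by auto
  ultimately show ?thesis using finite_roots[OF assms] by simp
qed

lemma subspace_int_lattice:
  assumes "X \<in> int_lattice W"
  shows "subspace X"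
proof -
  obtain B where "B \<subseteq> arrangement W" "X = \<Inter>B"
    using assms unfolding int_lattice_def by auto
  moreover have "\<forall>s\<in>arrangement W. subspace s"
    unfolding arrangement_def by (auto simp: subspace_def inner_add_left)
  ultimately show ?thesis using subspace_Inter by blast
qed

lemma UNIV_in_int_lattice: "UNIV \<in> int_lattice W"
  unfolding int_lattice_def by auto

lemma int_lattice_Int_hyperplane:
  assumes "X \<in> int_lattice W" "\<rho> \<in> roots W"
  shows "X \<inter> {x. x \<bullet> \<rho> = 0} \<in> int_lattice W"
proof -
  obtain B where B: "B \<subseteq> arrangement W" "X = \<Inter>B"
    using assms(1) unfolding int_lattice_def by auto
  have "X \<inter> {x. x \<bullet> \<rho> = 0} = \<Inter>(insert {x. x \<bullet> \<rho> = 0} B)" using B(2) by auto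
  moreover have "insert {x. x \<bullet> \<rho> = 0} B \<subseteq> arrangement W"
    using B(1) assms(2) unfolding arrangement_def by auto
  ultimately show ?thesis unfolding int_lattice_def by blast
qed


lemma finite_unit_vectors_dim_one:
  fixes X :: "'a::euclidean_space set"
  assumes "subspace X" "dim X = 1"
  shows "finite {r\<in>X. norm r = 1}"
proof -
  obtain B where B: "B \<subseteq> X" "independent B" "X \<subseteq> span B" "card B = dim X"
    using basis_exists by blast
  then obtain b where b: "B = {b}" using assms(2) by (auto simp: card_Suc_eq)
  have "b \<noteq> 0" using B(2) b by (auto simp: dependent_zero)
  have "{r\<in>X. norm r = 1} \<subseteq> {(1 / norm b) *\<^sub>R b, - (1 / norm b) *\<^sub>R b}"
  proof
    fix r assume r: "r \<in> {r\<in>X. norm r = 1}"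
    then obtain t where t: "r = t *\<^sub>R b" using B(3) b by (auto simp: span_singleton)
    hence "\<bar>t\<bar> = 1 / norm b" using r \<open>b \<noteq> 0\<close> by (simp add: field_simps)
    hence "t = 1 / norm b \<or> t = - (1 / norm b)" by linarith
    thus "r \<in> {(1 / norm b) *\<^sub>R b, - (1 / norm b) *\<^sub>R b}" using t by auto
  qed
  thus ?thesis by (rule finite_subset) simp
qed

lemma finite_unit_rays:
  assumes "finite W"
  shows "finite {r. unit_ray W r}"
proof -
  have "{r. unit_ray W r} \<subseteq> (\<Union>X\<in>{X\<in>int_lattice W. dim X = 1}. {r\<in>X. norm r = 1})"
    by (auto simp: unit_ray_def ray_def)
  moreover have "finite (\<Union>X\<in>{X\<in>int_lattice W. dim X = 1}. {r\<in>X. norm r = 1})"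
    using finite_int_lattice[OF assms] finite_unit_vectors_dim_one subspace_int_lattice by auto
  ultimately show ?thesis using finite_subset by blast
qed

text \<open>Cutting a flat by a hyperplane of the arrangement not containing it lowers its
  dimension by one, so the descent ends in a line of the lattice.\<close>

lemma int_lattice_contains_line:
  assumes "essential W"
  shows "X \<in> int_lattice W \<Longrightarrow> dim X = Suc k \<Longrightarrow> \<exists>Y\<in>int_lattice W. Y \<subseteq> X \<and> dim Y = 1"
proof (induction k arbitrary: X)
  case 0
  then show ?case by auto
next
  case (Suc k)
  have X: "subspace X" using subspace_int_lattice[OF Suc.prems(1)] .
  obtain x where x: "x \<in> X" "x \<noteq> 0"
    using Suc.prems(2) by (metis dim_eq_0 nat.distinct(1) subsetI singletonI)
  obtain \<rho> where \<rho>: "\<rho> \<in> roots W" "x \<bullet> \<rho> \<noteq> 0"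
    using spanning_set_not_orthogonal assms x(2) unfolding essential_def by blast
  define Y where "Y = X \<inter> {x. x \<bullet> \<rho> = 0}"
  have Y: "Y \<in> int_lattice W"
    unfolding Y_def by (rule int_lattice_Int_hyperplane[OF Suc.prems(1) \<rho>(1)])
  have "Y = X \<inter> {x. \<rho> \<bullet> x = 0}" unfolding Y_def by (auto simp: inner_commute)
  hence "aff_dim Y = aff_dim X - 1"
    using aff_dim_affine_Int_hyperplane[OF subspace_imp_affine[OF X], of \<rho> 0]
      x \<rho>(2) subspace_0[OF X] by (auto simp: inner_commute)
  hence "dim Y = Suc k"
    using aff_dim_subspace[OF X] aff_dim_subspace[OF subspace_int_lattice[OF Y]] Suc.prems(2)
    by simp
  then obtain Z where "Z \<in> int_lattice W" "Z \<subseteq> Y" "dim Z = 1" using Suc.IH[OF Y] by blast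
  thus ?case unfolding Y_def by blast
qed

lemma int_lattice_contains_unit_ray:
  assumes "essential W" "X \<in> int_lattice W" "X \<noteq> {0}"
  obtains r where "r \<in> X" "unit_ray W r"
proof -
  have "X \<noteq> {}" using subspace_0[OF subspace_int_lattice[OF assms(2)]] by auto
  hence "dim X \<noteq> 0" using assms(3) dim_eq_0 by blast
  then obtain Y where Y: "Y \<in> int_lattice W" "Y \<subseteq> X" "dim Y = 1"
    using int_lattice_contains_line[OF assms(1,2)] not0_implies_Suc by blast
  obtain y where y: "y \<in> Y" "y \<noteq> 0" using Y(3) by (metis dim_eq_0 subsetI singletonI zero_neq_one)
  define r where "r = (1 / norm y) *\<^sub>R y"
  have "r \<in> Y" unfolding r_def using subspace_scale[OF subspace_int_lattice[OF Y(1)] y(1)] .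
  moreover have "norm r = 1" unfolding r_def using y(2) by simp
  ultimately have "unit_ray W r" unfolding unit_ray_def ray_def using Y by auto
  thus ?thesis using that \<open>r \<in> Y\<close> Y(2) by blast
qed


lemma unit_ray_exists:
  assumes "essential W"
  obtains r where "unit_ray W r"
proof -
  have "(UNIV :: 'a set) \<noteq> {0}"
    by (metis UNIV_I empty_iff insert_iff nonzero_Basis SOME_Basis)
  then show ?thesis
    using int_lattice_contains_unit_ray[OF assms UNIV_in_int_lattice] that by blast
qed

lemma finite_ray_root_products:
  assumes "finite W"
  shows "finite {\<bar>r \<bullet> \<rho>\<bar> | r \<rho>. unit_ray W r \<and> \<rho> \<in> roots W \<and> r \<bullet> \<rho> \<noteq> 0}"
proof (rule finite_subset)
  show "{\<bar>r \<bullet> \<rho>\<bar> | r \<rho>. unit_ray W r \<and> \<rho> \<in> roots W \<and> r \<bullet> \<rho> \<noteq> 0}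
      \<subseteq> (\<lambda>(r, \<rho>). \<bar>r \<bullet> \<rho>\<bar>) ` ({r. unit_ray W r} \<times> roots W)" by auto
qed (use finite_unit_rays[OF assms] finite_roots[OF assms] in simp)

lemma lambda_const_le:
  assumes "finite W" "unit_ray W r" "\<rho> \<in> roots W" "r \<bullet> \<rho> \<noteq> 0"
  shows "lambda_const W \<le> \<bar>r \<bullet> \<rho>\<bar>"
  unfolding lambda_const_def using finite_ray_root_products[OF assms(1)] assms(2-4)
  by (intro Min_le) auto

lemma lambda_const_pos:
  assumes "finite W" "essential W"
  shows "0 < lambda_const W"
proof -
  obtain r where r: "unit_ray W r" using unit_ray_exists[OF assms(2)] .
  hence "r \<noteq> 0" by (simp add: unit_ray_def ray_def)
  then obtain \<rho> where "\<rho> \<in> roots W" "r \<bullet> \<rho> \<noteq> 0"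
    using spanning_set_not_orthogonal assms(2) unfolding essential_def by blast
  hence "{\<bar>r \<bullet> \<rho>\<bar> | r \<rho>. unit_ray W r \<and> \<rho> \<in> roots W \<and> r \<bullet> \<rho> \<noteq> 0} \<noteq> {}"
    using r by blast
  then show ?thesis
    unfolding lambda_const_def using finite_ray_root_products[OF assms(1)]
    by (subst Min_gr_iff) auto
qed

lemma aff_dim_H_Int_subspace:
  fixes v :: "'a::euclidean_space"
  assumes "subspace X" "v \<noteq> 0" "X = {0} \<or> (\<exists>x\<in>X. x \<bullet> v \<noteq> 0)"
  shows "aff_dim (H v \<inter> X) = aff_dim X - 1"
  using assms(3)
proof
  assume "X = {0}"
  moreover have "0 \<notin> H v" using assms(2) by (simp add: H_def)
  ultimately show ?thesis by auto
next
  assume "\<exists>x\<in>X. x \<bullet> v \<noteq> 0"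
  then obtain x where x: "x \<in> X" "x \<bullet> v \<noteq> 0" by blast
  have "((v \<bullet> v) / (x \<bullet> v)) *\<^sub>R x \<in> X \<inter> {y. v \<bullet> y = v \<bullet> v}"
    using subspace_scale[OF assms(1) x(1)] x(2) by (simp add: inner_commute)
  hence "X \<inter> {y. v \<bullet> y = v \<bullet> v} \<noteq> {}" by blast
  moreover have "\<not> X \<subseteq> {y. v \<bullet> y = v \<bullet> v}" using subspace_0[OF assms(1)] assms(2) by auto
  moreover have "H v \<inter> X = X \<inter> {y. v \<bullet> y = v \<bullet> v}" by (auto simp: H_def inner_commute)
  ultimately show ?thesis
    by (simp add: aff_dim_affine_Int_hyperplane[OF subspace_imp_affine[OF assms(1)]])
qed

lemma generic_if_unit_rays_not_orthogonal:
  assumes "essential W" and rays: "\<And>r. unit_ray W r \<Longrightarrow> r \<bullet> v \<noteq> 0"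
  shows "generic W v"
  unfolding generic_def
proof
  fix X assume X: "X \<in> int_lattice W"
  have ray_in: "\<exists>r\<in>Y. r \<bullet> v \<noteq> 0" if "Y \<in> int_lattice W" "Y \<noteq> {0}" for Y
    using int_lattice_contains_unit_ray[OF assms(1) that] rays by metis
  have "v \<noteq> 0" using unit_ray_exists[OF assms(1)] rays by force
  then show "aff_dim (H v \<inter> X) = aff_dim X - 1"
    using aff_dim_H_Int_subspace[OF subspace_int_lattice[OF X]] ray_in[OF X] by blast
qed

theorem proposition4p1:
  fixes W :: "('a::euclidean_space \<Rightarrow> 'a) set" and \<tau> :: "nat \<Rightarrow> 'a"
  assumes "finite_reflection_group W"
    and "essential W"
    and "\<forall>i < DIM('a). \<tau> i \<in> roots W"
    and "inj_on \<tau> {..<DIM('a)}"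
    and "independent (\<tau> ` {..<DIM('a)})"
  defines "a \<equiv> 1 + 1 / lambda_const W"
  defines "v \<equiv> (\<Sum>i<DIM('a). a ^ i *\<^sub>R \<tau> i)"
  shows "(\<forall>r. unit_ray W r \<longrightarrow> \<bar>r \<bullet> v\<bar> \<ge> lambda_const W) \<and> generic W v"
proof -
  have W: "finite W" using assms(1) unfolding finite_reflection_group_def by blast
  have "card (\<tau> ` {..<DIM('a)}) = DIM('a)" using assms(4) by (simp add: card_image)
  hence span_\<tau>: "span (\<tau> ` {..<DIM('a)}) = UNIV"
    using card_ge_dim_independent[of "\<tau> ` {..<DIM('a)}" UNIV] assms(5) by auto
  have bound: "lambda_const W \<le> \<bar>r \<bullet> v\<bar>" if r: "unit_ray W r" for r
  proof -
    have "norm r = 1" "r \<noteq> 0" using r by (auto simp: unit_ray_def)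
    obtain k where "k < DIM('a)" "r \<bullet> \<tau> k \<noteq> 0"
      using spanning_set_not_orthogonal[OF span_\<tau> \<open>r \<noteq> 0\<close>] by blast
    moreover have "\<bar>r \<bullet> \<tau> i\<bar> \<le> 1" if "i < DIM('a)" for i
      using Cauchy_Schwarz_ineq2[of r "\<tau> i"] assms(3) that \<open>norm r = 1\<close> by (simp add: roots_def)
    moreover have "r \<bullet> \<tau> i = 0 \<or> lambda_const W \<le> \<bar>r \<bullet> \<tau> i\<bar>" if "i < DIM('a)" for i
      using lambda_const_le[OF W r] assms(3) that by blast
    ultimately have "lambda_const W \<le> \<bar>\<Sum>i<DIM('a). a ^ i * (r \<bullet> \<tau> i)\<bar>"
      unfolding a_def using lambda_const_pos[OF W assms(2)]
      by (intro dominant_last_term_sum_bound) blast+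
    thus ?thesis unfolding v_def by (simp add: inner_sum_right)
  qed
  moreover have "generic W v"
    using generic_if_unit_rays_not_orthogonal[OF assms(2)] bound lambda_const_pos[OF W assms(2)]
    by force
  ultimately show ?thesis by blast
qed

end
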